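(* Let $\beta,\delta>0$, $\gamma\in\mathbb{R}$, and suppose $p(x)=\beta x^4+\gamma x^3+\delta x^2$ attains its global minimum at the origin. Then $$\int_{-\infty}^{\infty}e^{-[\beta x^4+\gamma x^3+\delta x^2]}\,dx\approx\left[\beta^{1/4}+|\gamma|^{1/3}+\delta^{1/2}\right]^{-1},$$ with implied constants independent of $\beta,\gamma,\delta$.
   Context: $X\approx Y$ means there is an absolute constant $c>0$ with $cY\le X\le c^{-1}Y$. *)

theory Defs
  imports "HOL-Analysis.Analysis"
begin

end

theory Submission
  imports Defs "HOL-Probability.Sinc_Integral"
begin

text \<open>
  Minimality at the origin forces \<open>\<gamma>\<^sup>2 \<le> 4\<beta>\<delta>\<close>. With \<open>\<beta> = a\<^sup>4\<close> and \<open>\<delta> = b\<^sup>2\<close> this reads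
  \<open>\<bar>\<gamma>\<bar> \<le> 2a\<^sup>2b\<close>, whence \<open>\<bar>\<gamma>\<bar> powr (1/3) \<le> a + b\<close>, so the integral has to be compared
  with \<open>1/(a + b)\<close>. The polynomial is squeezed between \<open>(a\<^sup>2x\<^sup>2 - b\<bar>x\<bar>)\<^sup>2\<close> and
  \<open>2(ax)\<^sup>4 + 2(bx)\<^sup>2\<close>. The upper estimate gives \<open>p \<le> 4\<close> on \<open>\<bar>x\<bar> \<le> 1/(a + b)\<close>. The lower
  one vanishes only at \<open>0\<close> and \<open>\<plusminus>b/a\<^sup>2\<close>; if \<open>m\<close> is the distance from \<open>x\<close> to the nearest
  of these points, it dominates both \<open>a\<^sup>4m\<^sup>4\<close> and \<open>b\<^sup>2m\<^sup>2/4\<close>, so \<open>exp (- p)\<close> is at most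
  twice a sum of three Lorentzians \<open>1/(1 + K(x - c)\<^sup>2)\<close> with \<open>sqrt K = max a (b/2)\<close>.
\<close>

lemma quartic_min_at_zero_imp_discriminant:
  fixes \<beta> \<gamma> \<delta> :: real
  assumes "\<beta> > 0" and "\<delta> \<ge> 0"
    and min0: "\<forall>x::real. \<beta> * x^4 + \<gamma> * x^3 + \<delta> * x^2 \<ge> \<beta> * 0^4 + \<gamma> * 0^3 + \<delta> * 0^2"
  shows "\<gamma>^2 \<le> 4 * \<beta> * \<delta>"
proof (cases "\<gamma> = 0")
  case True
  then show ?thesis using assms(1,2) by simp
next
  case False
  define x where "x = - \<gamma> / (2 * \<beta>)"
  have "x \<noteq> 0" using False \<open>\<beta> > 0\<close> by (simp add: x_def)
  have "0 \<le> \<beta> * x^4 + \<gamma> * x^3 + \<delta> * x^2" using min0 by simp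
  also have "\<dots> = x^2 * (\<beta> * x^2 + \<gamma> * x + \<delta>)"
    by (simp add: algebra_simps power2_eq_square power3_eq_cube power4_eq_xxxx)
  finally have "0 \<le> \<beta> * x^2 + \<gamma> * x + \<delta>" using \<open>x \<noteq> 0\<close> by (simp add: zero_le_mult_iff)
  also have "\<beta> * x^2 + \<gamma> * x + \<delta> = \<delta> - \<gamma>^2 / (4 * \<beta>)"
    using \<open>\<beta> > 0\<close> by (simp add: x_def power2_eq_square field_simps)
  finally show ?thesis using \<open>\<beta> > 0\<close> by (simp add: field_simps)
qed

lemma quartic_sandwich:
  fixes a b \<gamma> x :: real
  assumes "\<bar>\<gamma>\<bar> \<le> 2 * a^2 * b"
  shows "(a^2 * x^2 - b * \<bar>x\<bar>)^2 \<le> a^4 * x^4 + \<gamma> * x^3 + b^2 * x^2"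
    and "a^4 * x^4 + \<gamma> * x^3 + b^2 * x^2 \<le> 2 * (a * x)^4 + 2 * (b * x)^2"
proof -
  define t where "t = \<bar>x\<bar>"
  have pow: "x^2 = t^2" "x^4 = t^4" by (simp_all add: t_def)
  have "\<bar>\<gamma> * x^3\<bar> = \<bar>\<gamma>\<bar> * t^3" by (simp add: t_def abs_mult power_abs)
  also have "\<dots> \<le> 2 * a^2 * b * t^3" using assms by (intro mult_right_mono) (auto simp: t_def)
  finally have cubic: "\<bar>\<gamma> * x^3\<bar> \<le> 2 * a^2 * b * t^3" .
  have "(a^2 * t^2 - b * t)^2 = a^4 * t^4 - 2 * a^2 * b * t^3 + b^2 * t^2"
    by (simp add: power2_eq_square power3_eq_cube power4_eq_xxxx algebra_simps)
  then show "(a^2 * x^2 - b * \<bar>x\<bar>)^2 \<le> a^4 * x^4 + \<gamma> * x^3 + b^2 * x^2"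
    using cubic by (simp add: pow t_def[symmetric])
  have "0 \<le> (a^2 * t^2 - b * t)^2" by simp
  then have "2 * a^2 * b * t^3 \<le> a^4 * t^4 + b^2 * t^2"
    by (simp add: power2_eq_square power3_eq_cube power4_eq_xxxx algebra_simps)
  then show "a^4 * x^4 + \<gamma> * x^3 + b^2 * x^2 \<le> 2 * (a * x)^4 + 2 * (b * x)^2"
    using cubic by (simp add: pow power_mult_distrib)
qed

lemma min_sq_le_mult:
  fixes t s :: real
  assumes "0 \<le> t" "0 \<le> s"
  shows "(min t s)^2 \<le> t * s"
  using assms by (simp add: power2_eq_square mult_mono min_def)

lemma half_mult_min_dist_le_mult:
  fixes t c :: real
  assumes "0 \<le> t" "0 \<le> c"
  shows "c / 2 * min t \<bar>t - c\<bar> \<le> t * \<bar>t - c\<bar>"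
proof (cases "t \<ge> c / 2")
  case True
  then show ?thesis using assms by (intro mult_mono) auto
next
  case False
  then have "c / 2 \<le> \<bar>t - c\<bar>" by linarith
  then have "min t \<bar>t - c\<bar> * (c / 2) \<le> t * \<bar>t - c\<bar>" using assms by (intro mult_mono) auto
  then show ?thesis by (simp add: mult.commute)
qed

lemma exp_neg_le_two_inverse:
  fixes P u v :: real
  assumes "0 \<le> u" "u^2 \<le> P" "v \<le> P"
  shows "exp (- P) \<le> 2 * inverse (1 + max u v)"
proof -
  have "0 \<le> P" using assms(2) by (meson order_trans zero_le_power2)
  have "1 + max u v \<le> 2 * (1 + P)"
  proof -
    have "0 \<le> (u - 1/2)^2 + u^2 + 3/4" by (simp add: add_nonneg_nonneg)
    then have "1 + u \<le> 2 * (1 + u^2)" by (simp add: power2_eq_square algebra_simps)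
    then show ?thesis using assms \<open>0 \<le> P\<close> by (simp add: max_def)
  qed
  then have "inverse (1 + P) \<le> 2 * inverse (1 + max u v)"
    using assms(1) \<open>0 \<le> P\<close> by (simp add: field_simps)
  moreover have "exp (- P) \<le> inverse (1 + P)"
    using \<open>0 \<le> P\<close> by (simp add: exp_minus le_imp_inverse_le add_pos_nonneg exp_ge_add_one_self)
  ultimately show ?thesis by linarith
qed

definition lorentzian :: "real \<Rightarrow> real \<Rightarrow> real \<Rightarrow> real"
  where "lorentzian K c x = inverse (1 + K * (x - c)^2)"

lemma lorentzian_nonneg: "0 \<le> K \<Longrightarrow> 0 \<le> lorentzian K c x"
  by (simp add: lorentzian_def add_nonneg_nonneg)

lemma has_bochner_integral_lorentzian:
  assumes "K > 0"
  shows "has_bochner_integral lborel (lorentzian K c) (pi / sqrt K)"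
proof -
  have "integrable lborel (\<lambda>x::real. inverse (1 + x^2))"
    using integrable_inverse_1_plus_square by (simp add: set_integrable_def)
  moreover have "integral\<^sup>L lborel (\<lambda>x::real. inverse (1 + x^2)) = pi"
    using LBINT_inverse_1_plus_square
    by (simp add: interval_lebesgue_integral_def set_lebesgue_integral_def)
  ultimately have "has_bochner_integral lborel (\<lambda>y::real. inverse (1 + y^2)) pi"
    by (simp add: has_bochner_integral_iff)
  then have "has_bochner_integral lborel
      (\<lambda>x. inverse (1 + (sqrt K * x - sqrt K * c)^2)) (pi / sqrt K)"
    using assms lborel_has_bochner_integral_real_affine_iff[of "sqrt K"
        "\<lambda>y. inverse (1 + y^2)" pi "- sqrt K * c"]
    by (simp add: divide_inverse mult.commute)
  moreover have "(sqrt K * x - sqrt K * c)^2 = K * (x - c)^2" for x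
    using assms by (simp add: power2_eq_square algebra_simps)
  ultimately show ?thesis unfolding lorentzian_def by simp
qed

lemma exp_neg_quartic_le_lorentzians:
  fixes a b \<gamma> x :: real
  assumes "a > 0" "b > 0" "\<bar>\<gamma>\<bar> \<le> 2 * a^2 * b"
  defines "K \<equiv> max (a^2) (b^2 / 4)" and "x0 \<equiv> b / a^2"
  shows "exp (- (a^4 * x^4 + \<gamma> * x^3 + b^2 * x^2))
    \<le> 2 * (lorentzian K 0 x + lorentzian K x0 x + lorentzian K (- x0) x)"
proof -
  define P where "P = a^4 * x^4 + \<gamma> * x^3 + b^2 * x^2"
  define t where "t = \<bar>x\<bar>"
  define s where "s = \<bar>t - x0\<bar>"
  define m where "m = min t s"
  have "t \<ge> 0" "s \<ge> 0" "m \<ge> 0" "x0 \<ge> 0" using assms(1,2) by (auto simp: t_def s_def m_def x0_def)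
  have ax0: "a^2 * x0 = b" using assms(1) by (simp add: x0_def)
  have "a^2 * x^2 - b * \<bar>x\<bar> = a^2 * (t * (t - x0))"
    by (simp add: t_def power2_eq_square algebra_simps flip: ax0)
  then have "(a^2 * (t * s))^2 \<le> P"
    using quartic_sandwich(1)[OF assms(3), of x] by (simp add: P_def s_def power_mult_distrib abs_mult)
  moreover have "(a^2 * m^2)^2 \<le> (a^2 * (t * s))^2"
    using min_sq_le_mult[OF \<open>t \<ge> 0\<close> \<open>s \<ge> 0\<close>] \<open>m \<ge> 0\<close>
    by (intro power_mono mult_left_mono) (auto simp: m_def)
  moreover have "(a^2 * (x0 / 2 * m))^2 \<le> (a^2 * (t * s))^2"
    using half_mult_min_dist_le_mult[OF \<open>t \<ge> 0\<close> \<open>x0 \<ge> 0\<close>] \<open>m \<ge> 0\<close> \<open>x0 \<ge> 0\<close>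
    by (intro power_mono mult_left_mono) (auto simp: m_def s_def)
  moreover have "(a^2 * (x0 / 2 * m))^2 = b^2 / 4 * m^2"
    by (simp add: power2_eq_square algebra_simps flip: ax0)
  ultimately have "exp (- P) \<le> 2 * inverse (1 + max (a^2 * m^2) (b^2 / 4 * m^2))"
    by (intro exp_neg_le_two_inverse) auto
  also have "max (a^2 * m^2) (b^2 / 4 * m^2) = K * m^2"
    by (simp add: K_def max_mult_distrib_right)
  finally have bound: "exp (- P) \<le> 2 * lorentzian K 0 m" by (simp add: lorentzian_def)
  have "m^2 = x^2 \<or> m^2 = (x - x0)^2 \<or> m^2 = (x + x0)^2"
  proof -
    have "s^2 = (x - x0)^2 \<or> s^2 = (x + x0)^2"
      by (cases "x \<ge> 0") (auto simp: s_def t_def power2_eq_square algebra_simps)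
    then show ?thesis by (auto simp: m_def t_def min_def)
  qed
  then have "lorentzian K 0 m \<in> {lorentzian K 0 x, lorentzian K x0 x, lorentzian K (- x0) x}"
    by (auto simp: lorentzian_def)
  moreover have "0 \<le> lorentzian K c x" for c by (intro lorentzian_nonneg) (simp add: K_def le_max_iff_disj)
  ultimately have "lorentzian K 0 m \<le> lorentzian K 0 x + lorentzian K x0 x + lorentzian K (- x0) x"
    by (smt (verit) insert_iff singletonD)
  with bound show ?thesis unfolding P_def by argo
qed

lemma
  fixes a b \<gamma> :: real
  assumes "a > 0" "b > 0" "\<bar>\<gamma>\<bar> \<le> 2 * a^2 * b"
  shows integrable_exp_neg_quartic:
      "integrable lborel (\<lambda>x. exp (- (a^4 * x^4 + \<gamma> * x^3 + b^2 * x^2)))"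
    and exp_neg_quartic_integral_le: "(LBINT x. exp (- (a^4 * x^4 + \<gamma> * x^3 + b^2 * x^2))) \<le> 18 * pi / (a + b)"
proof -
  define K where "K = max (a^2) (b^2 / 4)"
  define x0 where "x0 = b / a^2"
  define f where "f x = exp (- (a^4 * x^4 + \<gamma> * x^3 + b^2 * x^2))" for x
  define M where "M x = 2 * (lorentzian K 0 x + lorentzian K x0 x + lorentzian K (- x0) x)" for x
  have "K > 0" using assms(1) by (simp add: K_def less_max_iff_disj)
  then have M_integral: "has_bochner_integral lborel M (2 * (pi / sqrt K + pi / sqrt K + pi / sqrt K))"
    unfolding M_def by (intro has_bochner_integral_add has_bochner_integral_mult_right
        has_bochner_integral_lorentzian)
  then have "integrable lborel M" by (simp add: has_bochner_integral_iff)
  have f_le_M: "f x \<le> M x" for x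
    using exp_neg_quartic_le_lorentzians[OF assms] by (simp add: f_def M_def K_def x0_def)
  have "f \<in> borel_measurable lborel" unfolding f_def by measurable
  then show "integrable lborel f"
    by (rule Bochner_Integration.integrable_bound[OF \<open>integrable lborel M\<close>])
      (use f_le_M in \<open>auto simp: f_def intro: order_trans[OF _ abs_ge_self]\<close>)
  then have "integral\<^sup>L lborel f \<le> integral\<^sup>L lborel M"
    using \<open>integrable lborel M\<close> f_le_M by (rule integral_mono)
  also have "\<dots> = 6 * pi / sqrt K" using M_integral by (simp add: has_bochner_integral_integral_eq)
  also have "\<dots> \<le> 18 * pi / (a + b)"
  proof -
    have "a^2 \<le> K" "(b / 2)^2 \<le> K" by (simp_all add: K_def power_divide)
    then have "sqrt (a^2) \<le> sqrt K" "sqrt ((b / 2)^2) \<le> sqrt K" by (simp_all only: real_sqrt_le_mono)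
    then have "a + b \<le> 3 * sqrt K" using assms(1,2) by simp
    then have "6 * pi * (a + b) \<le> 6 * pi * (3 * sqrt K)" by (intro mult_left_mono) auto
    then show ?thesis using assms(1,2) \<open>K > 0\<close> by (simp add: field_simps)
  qed
  finally show "integral\<^sup>L lborel f \<le> 18 * pi / (a + b)" .
qed

lemma exp_neg_quartic_integral_ge:
  fixes a b \<gamma> :: real
  assumes "a > 0" "b > 0" "\<bar>\<gamma>\<bar> \<le> 2 * a^2 * b"
  shows "2 * exp (- 4) / (a + b) \<le> (LBINT x. exp (- (a^4 * x^4 + \<gamma> * x^3 + b^2 * x^2)))"
proof -
  define r where "r = 1 / (a + b)"
  define f where "f = (\<lambda>x. exp (- (a^4 * x^4 + \<gamma> * x^3 + b^2 * x^2)))"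
  define L where "L x = exp (- 4) * (indicator {- r..r} x :: real)" for x
  have "r > 0" using assms(1,2) by (simp add: r_def)
  have L_integral: "has_bochner_integral lborel L (exp (- 4) * (2 * r))"
  proof -
    have "has_bochner_integral lborel (indicator {- r..r}) (measure lborel {- r..r})"
      by (rule has_bochner_integral_real_indicator) (auto simp: emeasure_lborel_Icc_eq)
    then show ?thesis
      using \<open>r > 0\<close> unfolding L_def by (intro has_bochner_integral_mult_right) simp
  qed
  have L_le_f: "L x \<le> f x" for x
  proof (cases "x \<in> {- r..r}")
    case True
    then have "\<bar>x\<bar> * (a + b) \<le> r * (a + b)"
      using assms(1,2) by (intro mult_right_mono) auto
    then have "\<bar>x\<bar> * (a + b) \<le> 1" using assms(1,2) by (simp add: r_def)
    then have "a * \<bar>x\<bar> + b * \<bar>x\<bar> \<le> 1" by (simp add: algebra_simps)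
    moreover have "0 \<le> a * \<bar>x\<bar>" "0 \<le> b * \<bar>x\<bar>" using assms(1,2) by simp_all
    ultimately have "a * \<bar>x\<bar> \<le> 1" "b * \<bar>x\<bar> \<le> 1" by linarith+
    then have "\<bar>a * x\<bar> \<le> 1" "\<bar>b * x\<bar> \<le> 1" using assms(1,2) by (simp_all add: abs_mult)
    then have "a^4 * x^4 + \<gamma> * x^3 + b^2 * x^2 \<le> 4"
      using quartic_sandwich(2)[OF assms(3), of x] power_le_one[OF abs_ge_zero, of _ 4]
        power_le_one[OF abs_ge_zero, of _ 2] by fastforce
    then show ?thesis using True by (simp add: L_def f_def)
  qed (simp add: L_def f_def)
  have "exp (- 4) * (2 * r) = integral\<^sup>L lborel L"
    using L_integral by (simp add: has_bochner_integral_integral_eq)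
  also have "\<dots> \<le> integral\<^sup>L lborel f"
    using L_integral integrable_exp_neg_quartic[OF assms, folded f_def] L_le_f
    by (intro integral_mono) (auto simp: has_bochner_integral_iff)
  finally show ?thesis by (simp add: r_def f_def mult.commute)
qed

lemma powr_one_third_le_add:
  fixes a b \<gamma> :: real
  assumes "0 \<le> a" "0 \<le> b" "\<bar>\<gamma>\<bar> \<le> 2 * a^2 * b"
  shows "\<bar>\<gamma>\<bar> powr (1/3) \<le> a + b"
proof -
  have "2 * a^2 * b \<le> (a + b)^3"
    using assms(1,2) by (simp add: power2_eq_square power3_eq_cube algebra_simps)
  then have "\<bar>\<gamma>\<bar> powr (1/3) \<le> ((a + b)^3) powr (1/3)"
    using assms(3) by (intro powr_mono2) auto
  also have "\<dots> = a + b"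
  proof -
    have "(a + b)^3 = (a + b) powr 3" using assms(1,2) powr_realpow'[of "a + b" 3] by simp
    then show ?thesis using assms(1,2) by (simp only: powr_powr) simp
  qed
  finally show ?thesis .
qed

lemma quartic_integral_approx:
  fixes a b \<gamma> :: real
  assumes "a > 0" "b > 0" "\<bar>\<gamma>\<bar> \<le> 2 * a^2 * b"
  defines "I \<equiv> LBINT x. exp (- (a^4 * x^4 + \<gamma> * x^3 + b^2 * x^2))"
    and "Y \<equiv> 1 / (a + \<bar>\<gamma>\<bar> powr (1/3) + b)"
  shows "Y / 200 \<le> I" and "I \<le> 200 * Y"
proof -
  define S where "S = a + \<bar>\<gamma>\<bar> powr (1/3) + b"
  have "0 < a + b" "a + b \<le> S" "S \<le> 2 * (a + b)"
    using powr_one_third_le_add[of a b \<gamma>] assms(1-3) by (auto simp: S_def)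
  have "exp (4::real) = exp 1 ^ 4" by (simp flip: exp_of_nat_mult)
  also have "\<dots> \<le> 3 ^ 4" by (intro power_mono exp_le) auto
  finally have "exp (4::real) \<le> 3 ^ 4" .
  then have "1 / 200 \<le> 2 * exp (- 4 :: real)" by (simp add: exp_minus field_simps)
  then have "(1 / 200) / S \<le> 2 * exp (- 4) / S"
    using \<open>0 < a + b\<close> \<open>a + b \<le> S\<close> by (intro divide_right_mono) auto
  then have "Y / 200 \<le> 2 * exp (- 4) / S" by (simp add: Y_def S_def mult.commute)
  also have "\<dots> \<le> 2 * exp (- 4) / (a + b)"
    using \<open>0 < a + b\<close> \<open>a + b \<le> S\<close> by (intro divide_left_mono) auto
  also have "\<dots> \<le> I" unfolding I_def by (rule exp_neg_quartic_integral_ge[OF assms(1-3)])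
  finally show "Y / 200 \<le> I" .
  have "I \<le> 18 * pi / (a + b)" unfolding I_def by (rule exp_neg_quartic_integral_le[OF assms(1-3)])
  also have "\<dots> = 36 * pi / (2 * (a + b))" using \<open>0 < a + b\<close> by (simp add: field_simps)
  also have "\<dots> \<le> 36 * pi / S"
    using \<open>0 < a + b\<close> \<open>a + b \<le> S\<close> \<open>S \<le> 2 * (a + b)\<close> by (intro divide_left_mono) auto
  also have "\<dots> \<le> 200 / S"
    using pi_less_4 \<open>0 < a + b\<close> \<open>a + b \<le> S\<close> by (intro divide_right_mono) auto
  finally show "I \<le> 200 * Y" by (simp add: Y_def S_def)
qed

theorem lemma4p7:
  shows "\<exists>c::real. c > 0 \<and>
    (\<forall>\<beta> \<gamma> \<delta> :: real. \<beta> > 0 \<longrightarrow> \<delta> > 0 \<longrightarrow>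
      (\<forall>x::real. \<beta> * x^4 + \<gamma> * x^3 + \<delta> * x^2 \<ge> \<beta> * 0^4 + \<gamma> * 0^3 + \<delta> * 0^2) \<longrightarrow>
      (let I = (LBINT x. exp (- (\<beta> * x^4 + \<gamma> * x^3 + \<delta> * x^2)));
           Y = 1 / (\<beta> powr (1/4) + \<bar>\<gamma>\<bar> powr (1/3) + \<delta> powr (1/2))
       in c * Y \<le> I \<and> I \<le> Y / c))"
proof (intro exI[of _ "1/200"] conjI allI impI)
  fix \<beta> \<gamma> \<delta> :: real
  assume "\<beta> > 0" "\<delta> > 0"
    and min0: "\<forall>x::real. \<beta> * x^4 + \<gamma> * x^3 + \<delta> * x^2 \<ge> \<beta> * 0^4 + \<gamma> * 0^3 + \<delta> * 0^2"
  define a where "a = \<beta> powr (1/4)"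
  define b where "b = \<delta> powr (1/2)"
  have "a > 0" "b > 0" using \<open>\<beta> > 0\<close> \<open>\<delta> > 0\<close> by (simp_all add: a_def b_def)
  have \<beta>_eq: "\<beta> = a^4" and \<delta>_eq: "\<delta> = b^2"
    using \<open>\<beta> > 0\<close> \<open>\<delta> > 0\<close> by (simp_all add: a_def b_def powr_powr flip: powr_realpow)
  have "\<gamma>^2 \<le> (2 * a^2 * b)^2"
    using quartic_min_at_zero_imp_discriminant[OF \<open>\<beta> > 0\<close> _ min0] \<open>\<delta> > 0\<close>
    by (simp add: \<beta>_eq \<delta>_eq power_mult_distrib flip: power_mult)
  then have "\<bar>\<gamma>\<bar> \<le> 2 * a^2 * b"
    using \<open>b > 0\<close> by (simp add: abs_le_square_iff[symmetric])
  then show "let I = (LBINT x. exp (- (\<beta> * x^4 + \<gamma> * x^3 + \<delta> * x^2)));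
           Y = 1 / (\<beta> powr (1/4) + \<bar>\<gamma>\<bar> powr (1/3) + \<delta> powr (1/2))
       in 1/200 * Y \<le> I \<and> I \<le> Y / (1/200)"
    using quartic_integral_approx[OF \<open>a > 0\<close> \<open>b > 0\<close>]
    unfolding Let_def a_def[symmetric] b_def[symmetric] unfolding \<beta>_eq \<delta>_eq
    by (simp add: mult.commute)
qed simp

end
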